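(* Let $\mathbb{G}$ be a finite graph and let $\mathbb{H}$ be a countable graph that is universal for $\mathrm{Forb}(\mathbb{G})$. Then $\mathrm{CSP}(\mathbb{H})$ is solvable in polynomial time.
   Context: A graph is a structure $(V,E)$ with a single symmetric binary relation $E$ (loops allowed). $\mathrm{Forb}(\mathbb{G})$ is the class of graphs $\mathbb{X}$ such that there is no homomorphism from $\mathbb{G}$ to $\mathbb{X}$. A countable graph $\mathbb{H}$ is universal for $\mathrm{Forb}(\mathbb{G})$ if a countable graph embeds into $\mathbb{H}$ if and only if it belongs to $\mathrm{Forb}(\mathbb{G})$. $\mathrm{CSP}(\mathbb{H})$ is the problem of deciding whether a given finite conjunction of atomic formulas $E(x,y)$ (equivalently, a given finite graph) is satisfiable in $\mathbb{H}$ (equivalently, maps homomorphically to $\mathbb{H}$). *)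

theory Defs
  imports Main "HOL-Library.Countable_Set"
begin

section \<open>Graphs (symmetric binary relation, loops allowed), given by a vertex carrier\<close>

definition is_graph :: "'a set \<Rightarrow> ('a \<times> 'a) set \<Rightarrow> bool" where
  "is_graph V E \<longleftrightarrow> E \<subseteq> V \<times> V \<and> sym E"

definition graph_hom :: "'a set \<Rightarrow> ('a \<times> 'a) set \<Rightarrow> 'b set \<Rightarrow> ('b \<times> 'b) set \<Rightarrow> ('a \<Rightarrow> 'b) \<Rightarrow> bool" where
  "graph_hom V E V' E' f \<longleftrightarrow> (\<forall>x\<in>V. f x \<in> V') \<and> (\<forall>(x,y)\<in>E. (f x, f y) \<in> E')"

definition graph_emb :: "'a set \<Rightarrow> ('a \<times> 'a) set \<Rightarrow> 'b set \<Rightarrow> ('b \<times> 'b) set \<Rightarrow> ('a \<Rightarrow> 'b) \<Rightarrow> bool" where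
  "graph_emb V E V' E' f \<longleftrightarrow> graph_hom V E V' E' f \<and> inj_on f V \<and>
     (\<forall>x\<in>V. \<forall>y\<in>V. (f x, f y) \<in> E' \<longrightarrow> (x, y) \<in> E)"

definition in_Forb :: "'g set \<Rightarrow> ('g \<times> 'g) set \<Rightarrow> 'a set \<Rightarrow> ('a \<times> 'a) set \<Rightarrow> bool" where
  "in_Forb VG EG V E \<longleftrightarrow> \<not> (\<exists>f. graph_hom VG EG V E f)"

text \<open>Every countable graph is isomorphic to one whose vertices are natural numbers, so it
  suffices to quantify over graphs with vertex set a subset of nat.\<close>
definition universal_for_Forb :: "'g set \<Rightarrow> ('g \<times> 'g) set \<Rightarrow> 'h set \<Rightarrow> ('h \<times> 'h) set \<Rightarrow> bool" where
  "universal_for_Forb VG EG VH EH \<longleftrightarrow>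
     (\<forall>(V :: nat set) E. is_graph V E \<longrightarrow>
        ((\<exists>f. graph_emb V E VH EH f) \<longleftrightarrow> in_Forb VG EG V E))"

definition csp_instance :: "nat \<Rightarrow> (nat \<times> nat) list \<Rightarrow> bool" where
  "csp_instance n es \<longleftrightarrow> (\<forall>(x,y)\<in>set es. x < n \<and> y < n)"

definition csp_sat :: "'h set \<Rightarrow> ('h \<times> 'h) set \<Rightarrow> nat \<Rightarrow> (nat \<times> nat) list \<Rightarrow> bool" where
  "csp_sat VH EH n es \<longleftrightarrow>
     (\<exists>f. (\<forall>x<n. f x \<in> VH) \<and> (\<forall>(x,y)\<in>set es. (f x, f y) \<in> EH))"

section \<open>Machine model: unit-cost RAM with addition, truncated subtraction, indirect addressing\<close>

datatype instr =
    LoadConst nat nat        (* M[r] := c *)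
  | AddI nat nat nat         (* M[r] := M[a] + M[b] *)
  | SubI nat nat nat         (* M[r] := M[a] - M[b]  (truncated) *)
  | LoadInd nat nat          (* M[r] := M[M[a]] *)
  | StoreInd nat nat         (* M[M[a]] := M[b] *)
  | Jz nat nat               (* if M[r] = 0 then goto l *)
  | Jmp nat                  (* goto l *)

type_synonym config = "nat \<times> (nat \<Rightarrow> nat)"

text \<open>The machine halts when the program counter leaves the program; halted
  configurations are fixed points of the step function.\<close>
fun ram_step :: "instr list \<Rightarrow> config \<Rightarrow> config" where
  "ram_step P (pc, M) =
    (if length P \<le> pc then (pc, M) else
     (case P ! pc of
        LoadConst r c \<Rightarrow> (Suc pc, M(r := c))
      | AddI r a b \<Rightarrow> (Suc pc, M(r := M a + M b))
      | SubI r a b \<Rightarrow> (Suc pc, M(r := M a - M b))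
      | LoadInd r a \<Rightarrow> (Suc pc, M(r := M (M a)))
      | StoreInd a b \<Rightarrow> (Suc pc, M(M a := M b))
      | Jz r l \<Rightarrow> (if M r = 0 then (l, M) else (Suc pc, M))
      | Jmp l \<Rightarrow> (l, M)))"

definition ram_halted :: "instr list \<Rightarrow> config \<Rightarrow> bool" where
  "ram_halted P c \<longleftrightarrow> length P \<le> fst c"

text \<open>Input encoding of an instance: M[0] = n, M[1] = number of atoms,
  M[2+2i], M[3+2i] = the i-th atom, all other cells 0.\<close>
definition ram_input :: "nat \<Rightarrow> (nat \<times> nat) list \<Rightarrow> nat \<Rightarrow> nat" where
  "ram_input n es = (\<lambda>a.
     if a = 0 then n
     else if a = 1 then length es
     else if a - 2 < 2 * length es then
       (if even (a - 2) then fst (es ! ((a - 2) div 2)) else snd (es ! ((a - 2) div 2)))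
     else 0)"

definition ram_run :: "instr list \<Rightarrow> nat \<Rightarrow> (nat \<times> nat) list \<Rightarrow> nat \<Rightarrow> config" where
  "ram_run P n es t = (ram_step P ^^ t) (0, ram_input n es)"

definition inst_size :: "nat \<Rightarrow> (nat \<times> nat) list \<Rightarrow> nat" where
  "inst_size n es = n + length es + 1"

definition csp_poly_time :: "'h set \<Rightarrow> ('h \<times> 'h) set \<Rightarrow> bool" where
  "csp_poly_time VH EH \<longleftrightarrow>
     (\<exists>(P :: instr list) (c :: nat) (d :: nat). \<forall>n es. csp_instance n es \<longrightarrow>
        (\<exists>t. t \<le> c * inst_size n es ^ d \<and> ram_halted P (ram_run P n es t) \<and>
             (snd (ram_run P n es t) 0 \<noteq> 0 \<longleftrightarrow> csp_sat VH EH n es)))"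

end

theory Submission
  imports Defs
begin

text \<open>An instance X, i.e. the graph on 0, ..., n - 1 whose edges are the atoms and their reversals,
  maps to H iff G does not map to X. Indeed, H lies in Forb(G) because it embeds into itself, so
  G cannot map to X if X maps to H; conversely, if G does not map to X, then X embeds into H by
  universality. Whether G maps to X is decided by trying all n ^ |VG| maps, polynomially many for
  fixed G. This brute force is written in a small while-language whose compilation to the RAM
  preserves step counts exactly, so correctness and running time are argued in the while-language.\<close>

section \<open>Reduction to the existence of a homomorphism from G\<close>

definition inst_edges :: "(nat \<times> nat) list \<Rightarrow> (nat \<times> nat) set" where
  "inst_edges es = {(x, y). (x, y) \<in> set es \<or> (y, x) \<in> set es}"

text \<open>H itself is (up to relabelling by natural numbers) a countable graph embedding into H,
  so it lies in Forb(G).\<close>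
lemma no_hom_to_universal:
  assumes "is_graph VH EH" "countable VH" "universal_for_Forb VG EG VH EH"
  shows "\<not> graph_hom VG EG VH EH k"
proof
  assume k: "graph_hom VG EG VH EH k"
  define g where "g = to_nat_on VH"
  define f where "f = from_nat_into VH"
  have fg: "f (g x) = x" if "x \<in> VH" for x
    unfolding f_def g_def using assms(2) that by simp
  have EH: "EH \<subseteq> VH \<times> VH" "sym EH" using assms(1) unfolding is_graph_def by auto
  have "is_graph (g ` VH) (map_prod g g ` EH)"
    unfolding is_graph_def using EH by (auto simp: sym_def)
  moreover have "graph_emb (g ` VH) (map_prod g g ` EH) VH EH f"
    unfolding graph_emb_def graph_hom_def
  proof (intro conjI)
    show "\<forall>x\<in>g ` VH. f x \<in> VH" "inj_on f (g ` VH)"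
      using fg by (auto simp: inj_on_def)
    show "\<forall>(x, y)\<in>map_prod g g ` EH. (f x, f y) \<in> EH"
      using fg EH(1) by (auto simp: subset_iff)
    show "\<forall>x\<in>g ` VH. \<forall>y\<in>g ` VH. (f x, f y) \<in> EH \<longrightarrow> (x, y) \<in> map_prod g g ` EH"
      using fg by force
  qed
  ultimately have "in_Forb VG EG (g ` VH) (map_prod g g ` EH)"
    using assms(3) unfolding universal_for_Forb_def by blast
  moreover have "graph_hom VG EG (g ` VH) (map_prod g g ` EH) (g \<circ> k)"
    using k unfolding graph_hom_def by force
  ultimately show False unfolding in_Forb_def by blast
qed

lemma csp_sat_iff_no_hom:
  assumes "is_graph VH EH" "countable VH" "universal_for_Forb VG EG VH EH" "csp_instance n es"
  shows "csp_sat VH EH n es \<longleftrightarrow> \<not> (\<exists>h. graph_hom VG EG {..<n} (inst_edges es) h)"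
proof
  assume "csp_sat VH EH n es"
  then obtain f where f: "\<forall>x<n. f x \<in> VH" "\<forall>(x, y)\<in>set es. (f x, f y) \<in> EH"
    unfolding csp_sat_def by blast
  have "sym EH" using assms(1) unfolding is_graph_def by auto
  then have "graph_hom {..<n} (inst_edges es) VH EH f"
    using f unfolding graph_hom_def inst_edges_def sym_def by auto
  then have "graph_hom VG EG VH EH (f \<circ> h)" if "graph_hom VG EG {..<n} (inst_edges es) h" for h
    using that unfolding graph_hom_def by auto
  then show "\<not> (\<exists>h. graph_hom VG EG {..<n} (inst_edges es) h)"
    using no_hom_to_universal[OF assms(1-3)] by blast
next
  assume "\<not> (\<exists>h. graph_hom VG EG {..<n} (inst_edges es) h)"
  moreover have "is_graph {..<n} (inst_edges es)"
    using assms(4) unfolding is_graph_def csp_instance_def inst_edges_def by (auto simp: sym_def)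
  ultimately obtain f where "graph_emb {..<n} (inst_edges es) VH EH f"
    using assms(3) unfolding universal_for_Forb_def in_Forb_def by blast
  then show "csp_sat VH EH n es"
    unfolding csp_sat_def graph_emb_def graph_hom_def inst_edges_def by auto
qed

definition index_edges :: "'g list \<Rightarrow> ('g \<times> 'g) set \<Rightarrow> (nat \<times> nat) list" where
  "index_edges gs EG =
     filter (\<lambda>(a, b). (gs ! a, gs ! b) \<in> EG) (List.product [0..<length gs] [0..<length gs])"

definition respects_edges :: "(nat \<times> nat) list \<Rightarrow> (nat \<times> nat) list \<Rightarrow> (nat \<Rightarrow> nat) \<Rightarrow> bool" where
  "respects_edges es L \<tau> \<longleftrightarrow> (\<forall>(a, b)\<in>set L. (\<tau> a, \<tau> b) \<in> inst_edges es)"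

lemma index_edges_less: "(a, b) \<in> set (index_edges gs EG) \<Longrightarrow> a < length gs \<and> b < length gs"
  unfolding index_edges_def by auto

lemma hom_iff_index_assignment:
  assumes "is_graph VG EG" "set gs = VG"
  shows "(\<exists>h. graph_hom VG EG {..<n} (inst_edges es) h) \<longleftrightarrow>
    (\<exists>\<tau>. (\<forall>j<length gs. \<tau> j < n) \<and> respects_edges es (index_edges gs EG) \<tau>)"
proof
  assume "\<exists>h. graph_hom VG EG {..<n} (inst_edges es) h"
  then obtain h where h: "graph_hom VG EG {..<n} (inst_edges es) h" by blast
  have "\<forall>j<length gs. h (gs ! j) < n"
    using h assms(2) unfolding graph_hom_def by auto
  moreover have "respects_edges es (index_edges gs EG) (\<lambda>j. h (gs ! j))"
    using h unfolding graph_hom_def respects_edges_def index_edges_def by auto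
  ultimately show "\<exists>\<tau>. (\<forall>j<length gs. \<tau> j < n) \<and> respects_edges es (index_edges gs EG) \<tau>"
    by (intro exI[of _ "\<lambda>j. h (gs ! j)"]) simp
next
  assume "\<exists>\<tau>. (\<forall>j<length gs. \<tau> j < n) \<and> respects_edges es (index_edges gs EG) \<tau>"
  then obtain \<tau> where \<tau>: "\<forall>j<length gs. \<tau> j < n" "respects_edges es (index_edges gs EG) \<tau>"
    by blast
  define ix where "ix x = (SOME j. j < length gs \<and> gs ! j = x)" for x
  have ix: "ix x < length gs \<and> gs ! ix x = x" if "x \<in> VG" for x
  proof -
    have "\<exists>j. j < length gs \<and> gs ! j = x" using that assms(2) by (auto simp: in_set_conv_nth)
    then show ?thesis unfolding ix_def by (rule someI_ex)
  qed
  have EG: "EG \<subseteq> VG \<times> VG" using assms(1) unfolding is_graph_def by auto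
  have "graph_hom VG EG {..<n} (inst_edges es) (\<tau> \<circ> ix)"
    unfolding graph_hom_def
  proof (intro conjI ballI)
    show "(\<tau> \<circ> ix) x \<in> {..<n}" if "x \<in> VG" for x using ix \<tau>(1) that by auto
    fix p assume p: "p \<in> EG"
    then obtain x y where xy: "p = (x, y)" "x \<in> VG" "y \<in> VG" using EG by blast
    then have "(ix x, ix y) \<in> set (index_edges gs EG)"
      using ix p unfolding index_edges_def by auto
    then show "case p of (x, y) \<Rightarrow> ((\<tau> \<circ> ix) x, (\<tau> \<circ> ix) y) \<in> inst_edges es"
      using \<tau>(2) xy unfolding respects_edges_def by auto
  qed
  then show "\<exists>h. graph_hom VG EG {..<n} (inst_edges es) h" by blast
qed

section \<open>A structured language compiled to the RAM\<close>

definition code_at :: "instr list \<Rightarrow> nat \<Rightarrow> instr list \<Rightarrow> bool" where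
  "code_at P s xs \<longleftrightarrow> s + length xs \<le> length P \<and> (\<forall>i<length xs. P ! (s + i) = xs ! i)"

lemma code_at_append: "code_at P s (xs @ ys) \<longleftrightarrow> code_at P s xs \<and> code_at P (s + length xs) ys"
  unfolding code_at_def by (auto simp: nth_append add.assoc)
    (metis add_diff_inverse_nat nat_add_left_cancel_less)

lemma code_at_Cons: "code_at P s (x # xs) \<longleftrightarrow> s < length P \<and> P ! s = x \<and> code_at P (Suc s) xs"
  using code_at_append[of P s "[x]" xs] by (auto simp: code_at_def)

lemma funpow_Suc_apply: "(f ^^ Suc n) x = (f ^^ n) (f x)"
  by (simp add: funpow_Suc_right del: funpow.simps)

lemma funpow_add_apply: "(f ^^ (m + n)) x = (f ^^ n) ((f ^^ m) x)"
  by (simp add: funpow_add add.commute[of m])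

text \<open>Variable x of a structured program lives at address M 1 + x, above a base address
  M 1 \<ge> 4; the cells 0, 2 and 3 are the scratch registers of the compiled code, which is why
  a load from an absolute address must avoid the cells 0 to 3.\<close>
abbreviation var :: "(nat \<Rightarrow> nat) \<Rightarrow> nat \<Rightarrow> nat" where
  "var M x \<equiv> M (M 1 + x)"

datatype com =
    CSkip
  | CConst nat nat
  | CAdd nat nat nat
  | CSub nat nat nat
  | CLoad nat nat
  | CSeq com com
  | CIf nat com com
  | CWhile nat com

text \<open>Big-step semantics; the cost is the number of RAM steps of the compiled code.\<close>
inductive exec :: "com \<Rightarrow> (nat \<Rightarrow> nat) \<Rightarrow> nat \<Rightarrow> (nat \<Rightarrow> nat) \<Rightarrow> bool" where
  Skip: "exec CSkip M 0 M"
| Const: "exec (CConst x c) M 4 (M(M 1 + x := c))"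
| Add: "exec (CAdd x y z) M 10 (M(M 1 + x := var M y + var M z))"
| Sub: "exec (CSub x y z) M 10 (M(M 1 + x := var M y - var M z))"
| Load: "3 < var M y \<Longrightarrow> exec (CLoad x y) M 7 (M(M 1 + x := M (var M y)))"
| Seq: "exec c1 M t1 M1 \<Longrightarrow> exec c2 M1 t2 M2 \<Longrightarrow> exec (CSeq c1 c2) M (t1 + t2) M2"
| IfTrue: "var M x \<noteq> 0 \<Longrightarrow> exec c1 M t M' \<Longrightarrow> exec (CIf x c1 c2) M (t + 5) M'"
| IfFalse: "var M x = 0 \<Longrightarrow> exec c2 M t M' \<Longrightarrow> exec (CIf x c1 c2) M (t + 4) M'"
| WhileFalse: "var M x = 0 \<Longrightarrow> exec (CWhile x c) M 4 M"
| WhileTrue: "var M x \<noteq> 0 \<Longrightarrow> exec c M t1 M1 \<Longrightarrow> exec (CWhile x c) M1 t2 M2 \<Longrightarrow>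
    exec (CWhile x c) M (t1 + t2 + 5) M2"

lemma exec_base: "exec c M t M' \<Longrightarrow> 4 \<le> M 1 \<Longrightarrow> M' 1 = M 1"
  by (induction rule: exec.induct) auto

fun code_size :: "com \<Rightarrow> nat" where
  "code_size CSkip = 0"
| "code_size (CConst x c) = 4"
| "code_size (CAdd x y z) = 10"
| "code_size (CSub x y z) = 10"
| "code_size (CLoad x y) = 7"
| "code_size (CSeq c1 c2) = code_size c1 + code_size c2"
| "code_size (CIf x c1 c2) = code_size c1 + code_size c2 + 5"
| "code_size (CWhile x c) = code_size c + 5"

definition addr :: "nat \<Rightarrow> instr list" where
  "addr x = [LoadConst 0 x, AddI 0 0 1]"

definition fetch :: "nat \<Rightarrow> nat \<Rightarrow> instr list" where
  "fetch r x = addr x @ [LoadInd r 0]"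

definition test_jump :: "nat \<Rightarrow> nat \<Rightarrow> instr list" where
  "test_jump x l = fetch 3 x @ [Jz 3 l]"

lemma length_addr [simp]: "length (addr x) = 2"
  and length_fetch [simp]: "length (fetch r x) = 3"
  and length_test_jump [simp]: "length (test_jump x l) = 4"
  by (simp_all add: addr_def fetch_def test_jump_def)

text \<open>The code of c placed at address s; jump targets are absolute.\<close>
fun compile :: "nat \<Rightarrow> com \<Rightarrow> instr list" where
  "compile s CSkip = []"
| "compile s (CConst x c) = addr x @ [LoadConst 2 c, StoreInd 0 2]"
| "compile s (CAdd x y z) = fetch 2 y @ fetch 3 z @ [AddI 2 2 3] @ addr x @ [StoreInd 0 2]"
| "compile s (CSub x y z) = fetch 2 y @ fetch 3 z @ [SubI 2 2 3] @ addr x @ [StoreInd 0 2]"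
| "compile s (CLoad x y) = fetch 2 y @ [LoadInd 2 2] @ addr x @ [StoreInd 0 2]"
| "compile s (CSeq c1 c2) = compile s c1 @ compile (s + code_size c1) c2"
| "compile s (CIf x c1 c2) =
     test_jump x (s + 5 + code_size c1) @ compile (s + 4) c1 @
     [Jmp (s + 5 + code_size c1 + code_size c2)] @ compile (s + 5 + code_size c1) c2"
| "compile s (CWhile x c) =
     test_jump x (s + 5 + code_size c) @ compile (s + 4) c @ [Jmp s]"

lemma length_compile [simp]: "length (compile s c) = code_size c"
  by (induction c arbitrary: s) auto

definition same_off_scratch :: "(nat \<Rightarrow> nat) \<Rightarrow> (nat \<Rightarrow> nat) \<Rightarrow> bool" where
  "same_off_scratch Mc M \<longleftrightarrow> (\<forall>a. a \<notin> {0, 2, 3} \<longrightarrow> Mc a = M a)"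

lemma same_off_scratch_cell: "same_off_scratch Mc M \<Longrightarrow> 3 < a \<or> a = 1 \<Longrightarrow> Mc a = M a"
  unfolding same_off_scratch_def by auto

definition simulates :: "instr list \<Rightarrow> nat \<Rightarrow> nat \<Rightarrow> nat \<Rightarrow> (nat \<Rightarrow> nat) \<Rightarrow> (nat \<Rightarrow> nat) \<Rightarrow> bool" where
  "simulates P s t e M M' \<longleftrightarrow> (\<forall>Mc. same_off_scratch Mc M \<longrightarrow>
     (\<exists>Mc'. (ram_step P ^^ t) (s, Mc) = (e, Mc') \<and> same_off_scratch Mc' M'))"

lemma simulates_trans:
  "simulates P s t1 e M M1 \<Longrightarrow> simulates P e t2 f M1 M2 \<Longrightarrow> simulates P s (t1 + t2) f M M2"
  unfolding simulates_def funpow_add_apply by metis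

lemma simulates_Jmp: "s < length P \<Longrightarrow> P ! s = Jmp l \<Longrightarrow> simulates P s 1 l M M"
  unfolding simulates_def by auto

lemma simulates_test_jump:
  assumes "code_at P s (test_jump x l)" "4 \<le> M 1"
  shows "simulates P s 4 (if var M x = 0 then l else s + 4) M M"
  unfolding simulates_def
proof (intro allI impI)
  fix Mc assume Mc: "same_off_scratch Mc M"
  then have "Mc 1 = M 1" "Mc (M 1 + x) = var M x"
    using assms(2) by (auto intro: same_off_scratch_cell)
  then show "\<exists>Mc'. (ram_step P ^^ 4) (s, Mc) = (if var M x = 0 then l else s + 4, Mc') \<and>
    same_off_scratch Mc' M"
    using assms Mc by (auto simp: test_jump_def fetch_def addr_def code_at_Cons numeral_eq_Suc
        funpow_Suc_apply same_off_scratch_def add.commute)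
qed

lemma simulates_branch:
  assumes "code_at P s (test_jump x l)" "4 \<le> M 1"
    and "simulates P (if var M x = 0 then l else s + 4) t e M M'"
  shows "simulates P s (4 + t) e M M'"
  using simulates_trans[OF simulates_test_jump[of P s x l M, OF assms(1,2)] assms(3)] .

lemma code_at_CIf:
  assumes "code_at P s (compile s (CIf x c1 c2))"
  shows "code_at P s (test_jump x (s + 5 + code_size c1))" "code_at P (s + 4) (compile (s + 4) c1)"
    "simulates P (s + 4 + code_size c1) 1 (s + code_size (CIf x c1 c2)) M M"
    "code_at P (s + 5 + code_size c1) (compile (s + 5 + code_size c1) c2)"
  using assms
  by (auto simp: code_at_append code_at_Cons ac_simps simp del: One_nat_def intro!: simulates_Jmp)

lemma code_at_CWhile:
  assumes "code_at P s (compile s (CWhile x c))"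
  shows "code_at P s (test_jump x (s + code_size (CWhile x c)))"
    "code_at P (s + 4) (compile (s + 4) c)"
    "simulates P (s + 4 + code_size c) 1 s M M"
  using assms
  by (auto simp: code_at_append code_at_Cons ac_simps simp del: One_nat_def intro!: simulates_Jmp)

lemma compile_correct:
  "exec c M t M' \<Longrightarrow> code_at P s (compile s c) \<Longrightarrow> 4 \<le> M 1 \<Longrightarrow>
   simulates P s t (s + code_size c) M M'"
proof (induction arbitrary: s rule: exec.induct)
  case (Seq c1 M t1 M1 c2 t2 M2)
  have "4 \<le> M1 1" using exec_base[OF Seq.hyps(1)] Seq.prems(2) by simp
  then have "simulates P s t1 (s + code_size c1) M M1"
    "simulates P (s + code_size c1) t2 (s + code_size c1 + code_size c2) M1 M2"
    using Seq.IH Seq.prems by (auto simp: code_at_append)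
  then show ?case using simulates_trans by (fastforce simp: add.assoc)
next
  case (IfTrue M x c1 t M' c2)
  note code = code_at_CIf[OF IfTrue.prems(1)]
  have "simulates P (s + 4) (t + 1) (s + code_size (CIf x c1 c2)) M M'"
    using simulates_trans[OF IfTrue.IH[OF code(2) IfTrue.prems(2)] code(3)] .
  then have "simulates P s (4 + (t + 1)) (s + code_size (CIf x c1 c2)) M M'"
    using IfTrue.hyps(1)
    by (intro simulates_branch[of P s x _ M, OF code(1) IfTrue.prems(2)]) simp
  then show ?case by (simp add: ac_simps)
next
  case (IfFalse M x c2 t M' c1)
  note code = code_at_CIf[OF IfFalse.prems(1)]
  have "simulates P (s + 5 + code_size c1) t (s + code_size (CIf x c1 c2)) M M'"
    using IfFalse.IH[OF code(4) IfFalse.prems(2)] by (simp add: ac_simps)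
  then have "simulates P s (4 + t) (s + code_size (CIf x c1 c2)) M M'"
    using IfFalse.hyps(1)
    by (intro simulates_branch[of P s x _ M, OF code(1) IfFalse.prems(2)]) simp
  then show ?case by (simp add: ac_simps)
next
  case (WhileFalse M x c)
  with code_at_CWhile(1)[OF WhileFalse.prems(1)] show ?case
    using simulates_test_jump[of P s x _ M] by simp
next
  case (WhileTrue M x c t1 M1 t2 M2)
  note code = code_at_CWhile[OF WhileTrue.prems(1)]
  have "4 \<le> M1 1" using exec_base[OF WhileTrue.hyps(2)] WhileTrue.prems(2) by simp
  then have "simulates P (s + 4) (t1 + (1 + t2)) (s + code_size (CWhile x c)) M M2"
    using WhileTrue.IH code(2,3) WhileTrue.prems by (blast intro: simulates_trans)
  then have "simulates P s (4 + (t1 + (1 + t2))) (s + code_size (CWhile x c)) M M2"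
    using WhileTrue.hyps(1)
    by (intro simulates_branch[of P s x _ M, OF code(1) WhileTrue.prems(2)]) simp
  then show ?case by (simp add: ac_simps)
qed (auto simp: simulates_def code_at_Cons fetch_def addr_def numeral_eq_Suc funpow_Suc_apply
    same_off_scratch_def add.commute dest!: same_off_scratch_cell[of _ _ 1])

section \<open>Specifications of structured programs\<close>

fun writes :: "com \<Rightarrow> nat set" where
  "writes CSkip = {}"
| "writes (CConst x c) = {x}"
| "writes (CAdd x y z) = {x}"
| "writes (CSub x y z) = {x}"
| "writes (CLoad x y) = {x}"
| "writes (CSeq c1 c2) = writes c1 \<union> writes c2"
| "writes (CIf x c1 c2) = writes c1 \<union> writes c2"
| "writes (CWhile x c) = writes c"

definition frame :: "nat set \<Rightarrow> (nat \<Rightarrow> nat) \<Rightarrow> (nat \<Rightarrow> nat) \<Rightarrow> bool" where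
  "frame W M M' \<longleftrightarrow> M' 1 = M 1 \<and> (\<forall>a<M 1. M' a = M a) \<and> (\<forall>x. x \<notin> W \<longrightarrow> M' (M 1 + x) = var M x)"

lemma frame_refl: "frame W M M"
  by (simp add: frame_def)

lemma frame_base: "frame W M M' \<Longrightarrow> M' 1 = M 1"
  by (simp add: frame_def)

lemma frame_var: "frame W M M' \<Longrightarrow> x \<notin> W \<Longrightarrow> var M' x = var M x"
  by (simp add: frame_def)

lemma frame_trans: "frame W1 M M1 \<Longrightarrow> frame W2 M1 M2 \<Longrightarrow> frame (W1 \<union> W2) M M2"
  by (simp add: frame_def)

lemma frame_mono: "frame W M M' \<Longrightarrow> W \<subseteq> W' \<Longrightarrow> frame W' M M'"
  by (auto simp: frame_def)

lemma exec_frame: "exec c M t M' \<Longrightarrow> 4 \<le> M 1 \<Longrightarrow> frame (writes c) M M'"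
proof (induction rule: exec.induct)
  case (Seq c1 M t1 M1 c2 t2 M2)
  then have "frame (writes c1) M M1" "frame (writes c2) M1 M2"
    using exec_base[OF Seq.hyps(1)] by auto
  then show ?case by (simp add: frame_trans)
next
  case (WhileTrue M x c t1 M1 t2 M2)
  then have "frame (writes c) M M1" "frame (writes c) M1 M2"
    using exec_base[OF WhileTrue.hyps(2)] by auto
  then show ?case using frame_trans by fastforce
qed (auto simp: frame_def)

definition wp :: "com \<Rightarrow> (nat \<Rightarrow> nat) \<Rightarrow> (nat \<Rightarrow> (nat \<Rightarrow> nat) \<Rightarrow> bool) \<Rightarrow> bool" where
  "wp c M Q \<longleftrightarrow> (\<exists>t M'. exec c M t M' \<and> Q t M')"

inductive_cases exec_CSkipE: "exec CSkip M t M'"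
inductive_cases exec_CConstE: "exec (CConst x c) M t M'"
inductive_cases exec_CAddE: "exec (CAdd x y z) M t M'"
inductive_cases exec_CSubE: "exec (CSub x y z) M t M'"
inductive_cases exec_CLoadE: "exec (CLoad x y) M t M'"
inductive_cases exec_CSeqE: "exec (CSeq c1 c2) M t M'"
inductive_cases exec_CIfE: "exec (CIf x c1 c2) M t M'"

lemma wp_CSkip [simp]: "wp CSkip M Q \<longleftrightarrow> Q 0 M"
  unfolding wp_def by (auto elim!: exec_CSkipE intro!: exI exec.Skip)

lemma wp_CConst [simp]: "wp (CConst x c) M Q \<longleftrightarrow> Q 4 (M(M 1 + x := c))"
  unfolding wp_def by (auto elim!: exec_CConstE intro!: exI exec.Const)

lemma wp_CAdd [simp]: "wp (CAdd x y z) M Q \<longleftrightarrow> Q 10 (M(M 1 + x := var M y + var M z))"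
  unfolding wp_def by (auto elim!: exec_CAddE intro!: exI exec.Add)

lemma wp_CSub [simp]: "wp (CSub x y z) M Q \<longleftrightarrow> Q 10 (M(M 1 + x := var M y - var M z))"
  unfolding wp_def by (auto elim!: exec_CSubE intro!: exI exec.Sub)

lemma wp_CLoad [simp]: "wp (CLoad x y) M Q \<longleftrightarrow> 3 < var M y \<and> Q 7 (M(M 1 + x := M (var M y)))"
  unfolding wp_def by (auto elim!: exec_CLoadE intro!: exI exec.Load)

lemma wp_CSeq [simp]: "wp (CSeq c1 c2) M Q \<longleftrightarrow> wp c1 M (\<lambda>t1 M1. wp c2 M1 (\<lambda>t2. Q (t1 + t2)))"
  unfolding wp_def by (blast elim: exec_CSeqE intro: exec.Seq)

lemma wp_CIf [simp]: "wp (CIf x c1 c2) M Q \<longleftrightarrow>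
    (if var M x \<noteq> 0 then wp c1 M (\<lambda>t. Q (t + 5)) else wp c2 M (\<lambda>t. Q (t + 4)))"
proof (cases "var M x = 0")
  case True
  then have "exec (CIf x c1 c2) M t' M' \<longleftrightarrow> (\<exists>t. t' = t + 4 \<and> exec c2 M t M')" for t' M'
    by (auto elim!: exec_CIfE intro: exec.IfFalse)
  then show ?thesis using True unfolding wp_def by auto
next
  case False
  then have "exec (CIf x c1 c2) M t' M' \<longleftrightarrow> (\<exists>t. t' = t + 5 \<and> exec c1 M t M')" for t' M'
    by (auto elim!: exec_CIfE intro: exec.IfTrue)
  then show ?thesis using False unfolding wp_def by auto
qed

lemma wp_mono: "wp c M Q \<Longrightarrow> (\<And>t M'. Q t M' \<Longrightarrow> Q' t M') \<Longrightarrow> wp c M Q'"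
  unfolding wp_def by blast

lemma wp_CWhile:
  assumes step: "\<And>M. I M \<Longrightarrow> var M x \<noteq> 0 \<Longrightarrow> wp c M (\<lambda>t M'. I M' \<and> f M' < f M \<and> t \<le> B)"
    and "I M"
  shows "wp (CWhile x c) M (\<lambda>t M'. I M' \<and> var M' x = 0 \<and> t \<le> (B + 5) * f M + 4)"
  using assms(2)
proof (induction "f M" arbitrary: M rule: less_induct)
  case less
  show ?case
  proof (cases "var M x = 0")
    case True
    then have "exec (CWhile x c) M 4 M" by (rule exec.WhileFalse)
    then show ?thesis using less.prems True unfolding wp_def by (intro exI[of _ 4] exI[of _ M]) simp
  next
    case False
    obtain t1 M1 where 1: "exec c M t1 M1" "I M1" "f M1 < f M" "t1 \<le> B"
      using step[OF less.prems False] unfolding wp_def by blast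
    obtain t2 M2 where 2: "exec (CWhile x c) M1 t2 M2" "I M2" "var M2 x = 0"
      "t2 \<le> (B + 5) * f M1 + 4"
      using less.hyps[OF 1(3) 1(2)] unfolding wp_def by blast
    have "(B + 5) * f M1 + (B + 5) \<le> (B + 5) * f M"
      using mult_le_mono2[of "f M1 + 1" "f M" "B + 5"] 1(3) by simp
    then have "t1 + t2 + 5 \<le> (B + 5) * f M + 4" using 1(4) 2(4) by linarith
    moreover have "exec (CWhile x c) M (t1 + t2 + 5) M2"
      using False 1(1) 2(1) by (rule exec.WhileTrue)
    ultimately show ?thesis using 2(2,3) unfolding wp_def by blast
  qed
qed

definition spec :: "com \<Rightarrow> (nat \<Rightarrow> nat) \<Rightarrow> nat set \<Rightarrow> ((nat \<Rightarrow> nat) \<Rightarrow> bool) \<Rightarrow> nat \<Rightarrow> bool" where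
  "spec c M W P T \<longleftrightarrow> wp c M (\<lambda>t M'. t \<le> T \<and> frame W M M' \<and> P M')"

lemma spec_intro:
  assumes "wp c M (\<lambda>t M'. t \<le> T \<and> P M')" "4 \<le> M 1" "writes c \<subseteq> W"
  shows "spec c M W P T"
proof -
  obtain t M' where "exec c M t M'" "t \<le> T" "P M'" using assms(1) unfolding wp_def by blast
  moreover from this have "frame W M M'" using exec_frame assms(2,3) frame_mono by blast
  ultimately show ?thesis unfolding spec_def wp_def by blast
qed

lemma spec_weaken:
  assumes "spec c M W P T" "W \<subseteq> W'" "T \<le> T'" "\<And>M'. frame W M M' \<Longrightarrow> P M' \<Longrightarrow> P' M'"
  shows "spec c M W' P' T'"
  using assms(1) unfolding spec_def
proof (rule wp_mono)
  fix t M' assume "t \<le> T \<and> frame W M M' \<and> P M'"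
  then show "t \<le> T' \<and> frame W' M M' \<and> P' M'" using assms(2-4) frame_mono[of W M M' W'] by auto
qed

lemma spec_CSkip: "spec CSkip M W (\<lambda>M'. M' = M) T"
  by (simp add: spec_def frame_refl)

lemma spec_CSeq:
  assumes "spec c1 M U P S" "\<And>M1. frame U M M1 \<Longrightarrow> P M1 \<Longrightarrow> spec c2 M1 V Q T"
    and "U \<union> V \<subseteq> W" "S + T \<le> T'"
  shows "spec (CSeq c1 c2) M W Q T'"
proof -
  have frame: "frame W M M2" if "frame U M M1" "frame V M1 M2" for M1 M2
    using frame_trans[OF that] assms(3) by (rule frame_mono)
  show ?thesis unfolding spec_def wp_CSeq
  proof (rule wp_mono[OF assms(1)[unfolded spec_def]])
    fix t1 M1 assume 1: "t1 \<le> S \<and> frame U M M1 \<and> P M1"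
    then have "wp c2 M1 (\<lambda>t2 M2. t2 \<le> T \<and> frame V M1 M2 \<and> Q M2)"
      using assms(2) unfolding spec_def by blast
    then show "wp c2 M1 (\<lambda>t2 M'. t1 + t2 \<le> T' \<and> frame W M M' \<and> Q M')"
      by (rule wp_mono) (use 1 frame[of M1] assms(4) in auto)
  qed
qed

lemma spec_CIf:
  assumes "var M x \<noteq> 0 \<Longrightarrow> spec c1 M W Q T" "var M x = 0 \<Longrightarrow> spec c2 M W Q T" "T + 5 \<le> T'"
  shows "spec (CIf x c1 c2) M W Q T'"
proof (cases "var M x = 0")
  case True
  with assms(2) have "wp c2 M (\<lambda>t M'. t \<le> T \<and> frame W M M' \<and> Q M')" unfolding spec_def by simp
  then have "wp c2 M (\<lambda>t M'. t + 4 \<le> T' \<and> frame W M M' \<and> Q M')"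
    by (rule wp_mono) (use assms(3) in simp)
  with True show ?thesis unfolding spec_def by simp
next
  case False
  with assms(1) have "wp c1 M (\<lambda>t M'. t \<le> T \<and> frame W M M' \<and> Q M')" unfolding spec_def by simp
  then have "wp c1 M (\<lambda>t M'. t + 5 \<le> T' \<and> frame W M M' \<and> Q M')"
    by (rule wp_mono) (use assms(3) in simp)
  with False show ?thesis unfolding spec_def by simp
qed

lemma spec_CWhile:
  assumes step: "\<And>M'. I M' \<Longrightarrow> var M' x \<noteq> 0 \<Longrightarrow> frame W M M' \<Longrightarrow>
      spec c M' W (\<lambda>M''. I M'' \<and> f M'' < f M') B"
    and "I M" "(B + 5) * f M + 4 \<le> T"
  shows "spec (CWhile x c) M W (\<lambda>M'. I M' \<and> var M' x = 0) T"
proof -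
  let ?I = "\<lambda>M'. I M' \<and> frame W M M'"
  have "wp c M' (\<lambda>t M''. ?I M'' \<and> f M'' < f M' \<and> t \<le> B)" if "?I M'" "var M' x \<noteq> 0" for M'
  proof -
    have "wp c M' (\<lambda>t M''. t \<le> B \<and> frame W M' M'' \<and> I M'' \<and> f M'' < f M')"
      using step[of M'] that unfolding spec_def by blast
    then show ?thesis
      by (rule wp_mono) (use that frame_trans[of W M M' W] in simp)
  qed
  moreover have "?I M" using assms(2) frame_refl by blast
  ultimately have "wp (CWhile x c) M (\<lambda>t M'. ?I M' \<and> var M' x = 0 \<and> t \<le> (B + 5) * f M + 4)"
    by (rule wp_CWhile[where I = "\<lambda>M'. I M' \<and> frame W M M'"])
  then show ?thesis unfolding spec_def
  proof (rule wp_mono)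
    fix t M' assume "?I M' \<and> var M' x = 0 \<and> t \<le> (B + 5) * f M + 4"
    moreover from this have "t \<le> T" using assms(3) by linarith
    ultimately show "t \<le> T \<and> frame W M M' \<and> I M' \<and> var M' x = 0" by blast
  qed
qed

section \<open>The brute-force algorithm\<close>

text \<open>var t becomes (a - u) + (u - a) in truncated arithmetic, which vanishes iff a = u.\<close>
definition eq_test :: "nat \<Rightarrow> nat \<Rightarrow> nat \<Rightarrow> com" where
  "eq_test t a u = CSeq (CSub t a u) (CSeq (CSub 13 u a) (CAdd t t 13))"

definition pair_test :: "nat \<Rightarrow> nat \<Rightarrow> nat \<Rightarrow> nat \<Rightarrow> com" where
  "pair_test a c u v = CSeq (eq_test 12 a u)
     (CSeq (eq_test 17 c v) (CSeq (CAdd 12 12 17) (CIf 12 CSkip (CConst 7 1))))"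

definition edge_test :: "nat \<Rightarrow> nat \<Rightarrow> nat \<Rightarrow> nat \<Rightarrow> com" where
  "edge_test a c u v = CSeq (pair_test a c u v) (pair_test a c v u)"

lemma eq_test_spec:
  assumes "4 \<le> M 1" "13 \<notin> {t, a, u}" "t \<notin> {a, u}"
  shows "spec (eq_test t a u) M {t, 13} (\<lambda>M'. var M' t = 0 \<longleftrightarrow> var M a = var M u) 30"
  by (rule spec_intro) (use assms in \<open>auto simp: eq_test_def\<close>)

lemma pair_test_spec:
  assumes "4 \<le> M 1" "{a, c, u, v} \<inter> {7, 12, 13, 17} = {}"
  shows "spec (pair_test a c u v) M {7, 12, 13, 17}
    (\<lambda>M'. var M' 7 \<noteq> 0 \<longleftrightarrow> var M 7 \<noteq> 0 \<or> (var M a = var M u \<and> var M c = var M v)) 80"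
  unfolding pair_test_def
proof (rule spec_CSeq[OF eq_test_spec[of M 12 a u], where V = "{7, 12, 13, 17}" and T = 50])
  fix M1 assume M1: "frame {12, 13} M M1" "var M1 12 = 0 \<longleftrightarrow> var M a = var M u"
  show "spec (CSeq (eq_test 17 c v) (CSeq (CAdd 12 12 17) (CIf 12 CSkip (CConst 7 1)))) M1
      {7, 12, 13, 17}
      (\<lambda>M'. var M' 7 \<noteq> 0 \<longleftrightarrow> var M 7 \<noteq> 0 \<or> (var M a = var M u \<and> var M c = var M v)) 50"
  proof (rule spec_CSeq[OF eq_test_spec[of M1 17 c v], where V = "{7, 12}" and T = 20])
    fix M2 assume M2: "frame {17, 13} M1 M2" "var M2 17 = 0 \<longleftrightarrow> var M1 c = var M1 v"
    have "var M2 12 = var M1 12" "var M2 7 = var M 7" "var M1 c = var M c" "var M1 v = var M v"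
      using frame_var[OF M1(1)] frame_var[OF M2(1)] assms(2) by auto
    then show "spec (CSeq (CAdd 12 12 17) (CIf 12 CSkip (CConst 7 1))) M2 {7, 12}
        (\<lambda>M'. var M' 7 \<noteq> 0 \<longleftrightarrow> var M 7 \<noteq> 0 \<or> (var M a = var M u \<and> var M c = var M v)) 20"
      using M1(2) M2(2) assms(1) frame_base[OF M1(1)] frame_base[OF M2(1)]
      by (intro spec_intro) auto
  qed (use assms frame_base[OF M1(1)] in auto)
qed (use assms in auto)

lemma edge_test_spec:
  assumes "4 \<le> M 1" "{a, c, u, v} \<inter> {7, 12, 13, 17} = {}"
  shows "spec (edge_test a c u v) M {7, 12, 13, 17} (\<lambda>M'. var M' 7 \<noteq> 0 \<longleftrightarrow>
    var M 7 \<noteq> 0 \<or> (var M a, var M c) \<in> {(var M u, var M v), (var M v, var M u)}) 160"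
  unfolding edge_test_def
proof (rule spec_CSeq[OF pair_test_spec[of M a c u v]])
  fix M1 assume M1: "frame {7, 12, 13, 17} M M1"
    "var M1 7 \<noteq> 0 \<longleftrightarrow> var M 7 \<noteq> 0 \<or> (var M a = var M u \<and> var M c = var M v)"
  have "var M1 a = var M a" "var M1 c = var M c" "var M1 u = var M u" "var M1 v = var M v"
    using frame_var[OF M1(1)] assms(2) by auto
  then show "spec (pair_test a c v u) M1 {7, 12, 13, 17} (\<lambda>M'. var M' 7 \<noteq> 0 \<longleftrightarrow>
    var M 7 \<noteq> 0 \<or> (var M a, var M c) \<in> {(var M u, var M v), (var M v, var M u)}) 80"
    using M1(2) assms frame_base[OF M1(1)]
    by (intro spec_weaken[OF pair_test_spec[of M1 a c v u]]) auto
qed (use assms in auto)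

text \<open>Edge es ! i with i \<ge> 1 stays in the input cells 2 + 2i and
  3 + 2i below the base; edge 0 occupied scratch registers and is copied to the variables 1 and 2.
  The variables 0, 3 and 4 hold n, a flag for es \<noteq> [] and the base, and 14, 15, 16 hold the
  constants 1, 2, 4. The algorithm uses variable 5 for "a homomorphism was found", 6 for "all edges
  checked so far are present", 7 for "the current edge was found", 8 and 9 for the scan over the
  edges, 10 and 11 for the edge just loaded, 12, 13, 17 as temporaries, and 20 + 2k, 21 + 2k for
  the image of vertex k of G and its loop counter.\<close>
definition layout :: "nat \<Rightarrow> (nat \<times> nat) list \<Rightarrow> (nat \<Rightarrow> nat) \<Rightarrow> bool" where
  "layout n es M \<longleftrightarrow> M 1 = (if es = [] then 4 else 4 * length es) \<and>
    var M 0 = n \<and> var M 4 = M 1 \<and> var M 14 = 1 \<and> var M 15 = 2 \<and> var M 16 = 4 \<and>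
    (var M 3 \<noteq> 0 \<longleftrightarrow> es \<noteq> []) \<and> (es \<noteq> [] \<longrightarrow> (var M 1, var M 2) = es ! 0) \<and>
    (\<forall>i. 1 \<le> i \<and> i < length es \<longrightarrow> (M (2 + 2 * i), M (3 + 2 * i)) = es ! i)"

lemma layout_base: "layout n es M \<Longrightarrow> 4 \<le> M 1"
  unfolding layout_def by (cases es) auto

lemma layout_edge: "layout n es M \<Longrightarrow> 1 \<le> i \<Longrightarrow> i < length es \<Longrightarrow> (M (2 + 2 * i), M (3 + 2 * i)) = es ! i"
  unfolding layout_def by blast

lemma layout_frame:
  assumes "layout n es M" "frame W M M'" "W \<inter> {0, 1, 2, 3, 4, 14, 15, 16} = {}"
  shows "layout n es M'"
proof -
  have "3 + 2 * i < M 1" if "i < length es" for i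
    using assms(1) that unfolding layout_def by (cases es) auto
  moreover have "\<forall>x\<in>{0, 1, 2, 3, 4, 14, 15, 16}. var M' x = var M x"
    using frame_var[OF assms(2)] assms(3) by blast
  moreover have "M' 1 = M 1" "\<forall>a<M 1. M' a = M a"
    using assms(2) unfolding frame_def by auto
  ultimately show ?thesis
    using assms(1) unfolding layout_def by (auto simp del: One_nat_def)
qed

definition edge_upto :: "(nat \<times> nat) list \<Rightarrow> nat \<Rightarrow> nat \<Rightarrow> nat \<Rightarrow> bool" where
  "edge_upto es j U V \<longleftrightarrow> (\<exists>i<length es. i \<le> j \<and> es ! i \<in> {(U, V), (V, U)})"

lemma edge_upto_0: "edge_upto es 0 U V \<longleftrightarrow> es \<noteq> [] \<and> es ! 0 \<in> {(U, V), (V, U)}"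
  unfolding edge_upto_def by auto

lemma edge_upto_Suc: "edge_upto es (Suc j) U V \<longleftrightarrow>
    edge_upto es j U V \<or> (Suc j < length es \<and> es ! Suc j \<in> {(U, V), (V, U)})"
  unfolding edge_upto_def by (auto simp: le_Suc_eq)

lemma edge_upto_all: "length es - 1 \<le> j \<Longrightarrow> edge_upto es j U V \<longleftrightarrow> (U, V) \<in> inst_edges es"
  unfolding edge_upto_def inst_edges_def by (auto simp: in_set_conv_nth)

definition load_edge :: com where
  "load_edge = CSeq (CLoad 10 8) (CSeq (CAdd 13 8 14) (CLoad 11 13))"

definition advance :: com where
  "advance = CSeq (CAdd 8 8 15) (CSub 9 9 16)"

text \<open>var 8 points to the input cells of the current edge; var 9 counts the remaining edges down
  in steps of 4.\<close>
definition scan_step :: "nat \<Rightarrow> nat \<Rightarrow> com" where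
  "scan_step u v = CSeq load_edge (CSeq (edge_test 10 11 u v) advance)"

definition test_first_edge :: "nat \<Rightarrow> nat \<Rightarrow> com" where
  "test_first_edge u v = CSeq (CConst 7 0) (CIf 3 (edge_test 1 2 u v) CSkip)"

definition scan_init :: com where
  "scan_init = CSeq (CSub 9 4 16) (CConst 8 4)"

definition edge_check :: "nat \<Rightarrow> nat \<Rightarrow> com" where
  "edge_check u v = CSeq (test_first_edge u v) (CSeq scan_init (CWhile 9 (scan_step u v)))"

lemma load_edge_spec:
  assumes "4 \<le> M 1" "var M 14 = 1" "3 < var M 8" "var M 8 + 1 < M 1"
  shows "spec load_edge M {10, 11, 13}
    (\<lambda>M'. (var M' 10, var M' 11) = (M (var M 8), M (var M 8 + 1))) 24"
  by (rule spec_intro) (use assms in \<open>auto simp: load_edge_def\<close>)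

lemma scan_step_spec:
  assumes "layout n es M" "20 \<le> u" "20 \<le> v"
    and "var M 8 = 4 + 2 * j" "var M 9 = 4 * (length es - 1) - 4 * j" "var M 9 \<noteq> 0"
  shows "spec (scan_step u v) M {7, 8, 9, 10, 11, 12, 13, 17}
    (\<lambda>M'. var M' 8 = 4 + 2 * Suc j \<and> var M' 9 = var M 9 - 4 \<and>
      (var M' 7 \<noteq> 0 \<longleftrightarrow> var M 7 \<noteq> 0 \<or> es ! Suc j \<in> {(var M u, var M v), (var M v, var M u)})) 204"
proof -
  have j: "Suc j < length es" using assms(5,6) by auto
  have eq: "2 + 2 * Suc j = var M 8" "3 + 2 * Suc j = var M 8 + 1" using assms(4) by simp_all
  have edge: "(M (var M 8), M (var M 8 + 1)) = es ! Suc j"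
    using layout_edge[OF assms(1) _ j, unfolded eq] by simp
  have M: "M 1 = 4 * length es" "var M 14 = 1" "var M 15 = 2" "var M 16 = 4"
    using assms(1) j unfolding layout_def by auto
  show ?thesis unfolding scan_step_def
  proof (rule spec_CSeq[OF load_edge_spec, where V = "{7, 8, 9, 12, 13, 17}" and T = 180])
    show "4 \<le> M 1" "var M 14 = 1" "3 < var M 8" "var M 8 + 1 < M 1"
      using M assms(4) j by auto
    fix M1 assume M1: "frame {10, 11, 13} M M1"
      "(var M1 10, var M1 11) = (M (var M 8), M (var M 8 + 1))"
    have M1_var: "var M1 x = var M x" if "x \<notin> {10, 11, 13}" for x
      using frame_var[OF M1(1)] that by blast
    show "spec (CSeq (edge_test 10 11 u v) advance) M1 {7, 8, 9, 12, 13, 17}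
      (\<lambda>M'. var M' 8 = 4 + 2 * Suc j \<and> var M' 9 = var M 9 - 4 \<and>
        (var M' 7 \<noteq> 0 \<longleftrightarrow> var M 7 \<noteq> 0 \<or> es ! Suc j \<in> {(var M u, var M v), (var M v, var M u)})) 180"
    proof (rule spec_CSeq[OF edge_test_spec[of M1 10 11 u v], where V = "{8, 9}" and T = 20])
      fix M2 assume M2: "frame {7, 12, 13, 17} M1 M2" "var M2 7 \<noteq> 0 \<longleftrightarrow> var M1 7 \<noteq> 0 \<or>
        (var M1 10, var M1 11) \<in> {(var M1 u, var M1 v), (var M1 v, var M1 u)}"
      have "var M2 x = var M x" if "x \<notin> {7, 10, 11, 12, 13, 17}" for x
        using frame_var[OF M2(1)] M1_var that by auto
      then have "var M2 8 = var M 8" "var M2 9 = var M 9" "var M2 15 = 2" "var M2 16 = 4"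
        using M by auto
      moreover have "var M2 7 \<noteq> 0 \<longleftrightarrow>
        var M 7 \<noteq> 0 \<or> es ! Suc j \<in> {(var M u, var M v), (var M v, var M u)}"
        using M2(2) M1(2) M1_var[of 7] M1_var[of u] M1_var[of v] edge assms(2,3) by auto
      ultimately show "spec advance M2 {8, 9}
        (\<lambda>M'. var M' 8 = 4 + 2 * Suc j \<and> var M' 9 = var M 9 - 4 \<and>
        (var M' 7 \<noteq> 0 \<longleftrightarrow> var M 7 \<noteq> 0 \<or> es ! Suc j \<in> {(var M u, var M v), (var M v, var M u)})) 20"
        using assms(4) M(1) j frame_base[OF M1(1)] frame_base[OF M2(1)]
        by (intro spec_intro) (auto simp: advance_def)
    qed (use M(1) j frame_base[OF M1(1)] assms(2,3) in auto)
  qed auto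
qed

lemma test_first_edge_spec:
  assumes "layout n es M" "20 \<le> u" "20 \<le> v"
  shows "spec (test_first_edge u v) M {7, 12, 13, 17}
    (\<lambda>M'. var M' 7 \<noteq> 0 \<longleftrightarrow> edge_upto es 0 (var M u) (var M v)) 169"
  unfolding test_first_edge_def
proof (rule spec_CSeq[where U = "{7}" and P = "\<lambda>M'. var M' 7 = 0" and S = 4
      and V = "{7, 12, 13, 17}" and T = 165])
  show "spec (CConst 7 0) M {7} (\<lambda>M'. var M' 7 = 0) 4"
    using layout_base[OF assms(1)] by (intro spec_intro) auto
  fix M1 assume M1: "frame {7} M M1" "var M1 7 = 0"
  have M1_var: "var M1 x = var M x" if "x \<noteq> 7" for x
    using frame_var[OF M1(1)] that by auto
  have first: "var M1 3 \<noteq> 0 \<longleftrightarrow> es \<noteq> []" "es \<noteq> [] \<Longrightarrow> (var M1 1, var M1 2) = es ! 0"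
    using assms(1) M1_var[of 1] M1_var[of 2] M1_var[of 3] unfolding layout_def by auto
  show "spec (CIf 3 (edge_test 1 2 u v) CSkip) M1 {7, 12, 13, 17}
    (\<lambda>M'. var M' 7 \<noteq> 0 \<longleftrightarrow> edge_upto es 0 (var M u) (var M v)) 165"
  proof (rule spec_CIf[where T = 160])
    assume "var M1 3 \<noteq> 0"
    then show "spec (edge_test 1 2 u v) M1 {7, 12, 13, 17}
      (\<lambda>M'. var M' 7 \<noteq> 0 \<longleftrightarrow> edge_upto es 0 (var M u) (var M v)) 160"
      using first M1(2) M1_var[of u] M1_var[of v] assms(2,3)
        layout_base[OF assms(1)] frame_base[OF M1(1)]
      by (intro spec_weaken[OF edge_test_spec[of M1 1 2 u v]]) (auto simp: edge_upto_0)
  next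
    assume "var M1 3 = 0"
    then show "spec CSkip M1 {7, 12, 13, 17}
      (\<lambda>M'. var M' 7 \<noteq> 0 \<longleftrightarrow> edge_upto es 0 (var M u) (var M v)) 160"
      using first M1(2) by (intro spec_weaken[OF spec_CSkip]) (auto simp: edge_upto_0)
  qed simp
qed auto

lemma scan_init_spec:
  assumes "layout n es M"
  shows "spec scan_init M {8, 9} (\<lambda>M'. var M' 9 = 4 * (length es - 1) \<and> var M' 8 = 4) 14"
proof -
  have "M 1 - 4 = 4 * (length es - 1)"
    using assms unfolding layout_def by (cases es) auto
  moreover have "var M 16 = 4" "var M 4 = M 1"
    using assms unfolding layout_def by auto
  ultimately show ?thesis
    using layout_base[OF assms] by (intro spec_intro) (auto simp: scan_init_def)
qed

abbreviation edge_check_vars :: "nat set" where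
  "edge_check_vars \<equiv> {7, 8, 9, 10, 11, 12, 13, 17}"

lemma scan_loop_spec:
  assumes "layout n es M" "20 \<le> u" "20 \<le> v"
    and "var M 8 = 4" "var M 9 = 4 * (length es - 1)"
    and "var M 7 \<noteq> 0 \<longleftrightarrow> edge_upto es 0 (var M u) (var M v)"
  shows "spec (CWhile 9 (scan_step u v)) M edge_check_vars
    (\<lambda>M'. var M' 7 \<noteq> 0 \<longleftrightarrow> (var M u, var M v) \<in> inst_edges es) (209 * (4 * (length es - 1)) + 4)"
proof -
  define I where "I M' \<longleftrightarrow> (\<exists>j. var M' 8 = 4 + 2 * j \<and> var M' 9 = 4 * (length es - 1) - 4 * j \<and>
    (var M' 7 \<noteq> 0 \<longleftrightarrow> edge_upto es j (var M u) (var M v)))" for M'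
  have "spec (CWhile 9 (scan_step u v)) M edge_check_vars (\<lambda>M'. I M' \<and> var M' 9 = 0)
    (209 * (4 * (length es - 1)) + 4)"
  proof (rule spec_CWhile[where f = "\<lambda>M'. var M' 9" and B = 204])
    fix M' assume "I M'" "var M' 9 \<noteq> 0" and M': "frame edge_check_vars M M'"
    then obtain j where j: "var M' 8 = 4 + 2 * j" "var M' 9 = 4 * (length es - 1) - 4 * j"
      "var M' 7 \<noteq> 0 \<longleftrightarrow> edge_upto es j (var M u) (var M v)" "var M' 9 \<noteq> 0"
      unfolding I_def by blast
    have L': "layout n es M'" by (rule layout_frame[OF assms(1) M']) auto
    have uv: "var M' u = var M u" "var M' v = var M v"
      using frame_var[OF M'] assms(2,3) by auto
    show "spec (scan_step u v) M' edge_check_vars (\<lambda>M''. I M'' \<and> var M'' 9 < var M' 9) 204"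
    proof (rule spec_weaken[OF scan_step_spec[OF L' assms(2,3) j(1,2,4)]])
      fix M'' assume "var M'' 8 = 4 + 2 * Suc j \<and> var M'' 9 = var M' 9 - 4 \<and>
        (var M'' 7 \<noteq> 0 \<longleftrightarrow> var M' 7 \<noteq> 0 \<or> es ! Suc j \<in> {(var M' u, var M' v), (var M' v, var M' u)})"
      moreover have "Suc j < length es" using j(2,4) by simp
      ultimately have "var M'' 8 = 4 + 2 * Suc j" "var M'' 9 = 4 * (length es - 1) - 4 * Suc j"
        "var M'' 7 \<noteq> 0 \<longleftrightarrow> edge_upto es (Suc j) (var M u) (var M v)" "var M'' 9 < var M' 9"
        using j uv by (simp_all add: edge_upto_Suc)
      then show "I M'' \<and> var M'' 9 < var M' 9"
        unfolding I_def by blast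
    qed auto
  next
    show "I M" unfolding I_def using assms(4-6) by (intro exI[of _ 0]) simp
  qed (use assms(5) in simp)
  then show ?thesis
  proof (rule spec_weaken)
    fix M' assume "I M' \<and> var M' 9 = 0"
    then obtain j where "length es - 1 \<le> j" "var M' 7 \<noteq> 0 \<longleftrightarrow> edge_upto es j (var M u) (var M v)"
      unfolding I_def by auto
    then show "var M' 7 \<noteq> 0 \<longleftrightarrow> (var M u, var M v) \<in> inst_edges es"
      using edge_upto_all by blast
  qed auto
qed

lemma edge_check_spec:
  assumes "layout n es M" "20 \<le> u" "20 \<le> v"
  shows "spec (edge_check u v) M edge_check_vars
    (\<lambda>M'. var M' 7 \<noteq> 0 \<longleftrightarrow> (var M u, var M v) \<in> inst_edges es) (1000 * (length es + 1))"
  unfolding edge_check_def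
proof (rule spec_CSeq[OF test_first_edge_spec[OF assms], where V = edge_check_vars
      and T = "14 + (209 * (4 * (length es - 1)) + 4)"])
  fix M1 assume M1: "frame {7, 12, 13, 17} M M1"
    "var M1 7 \<noteq> 0 \<longleftrightarrow> edge_upto es 0 (var M u) (var M v)"
  have L1: "layout n es M1" by (rule layout_frame[OF assms(1) M1(1)]) auto
  show "spec (CSeq scan_init (CWhile 9 (scan_step u v))) M1 edge_check_vars
    (\<lambda>M'. var M' 7 \<noteq> 0 \<longleftrightarrow> (var M u, var M v) \<in> inst_edges es)
    (14 + (209 * (4 * (length es - 1)) + 4))"
  proof (rule spec_CSeq[OF scan_init_spec[OF L1], where V = edge_check_vars
        and T = "209 * (4 * (length es - 1)) + 4"])
    fix M2 assume M2: "frame {8, 9} M1 M2" "var M2 9 = 4 * (length es - 1) \<and> var M2 8 = 4"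
    have M2_frame: "frame edge_check_vars M M2"
      using frame_trans[OF M1(1) M2(1)] by (rule frame_mono) auto
    have "var M2 u = var M u" "var M2 v = var M v" "var M2 7 = var M1 7"
      using frame_var[OF M2_frame] frame_var[OF M2(1), of 7] assms(2,3) by auto
    then show "spec (CWhile 9 (scan_step u v)) M2 edge_check_vars
      (\<lambda>M'. var M' 7 \<noteq> 0 \<longleftrightarrow> (var M u, var M v) \<in> inst_edges es) (209 * (4 * (length es - 1)) + 4)"
      using scan_loop_spec[OF layout_frame[OF assms(1) M2_frame] assms(2,3)] M1(2) M2(2) by auto
  qed auto
qed auto

abbreviation assignment :: "(nat \<Rightarrow> nat) \<Rightarrow> nat \<Rightarrow> nat" where
  "assignment M \<equiv> \<lambda>i. var M (20 + 2 * i)"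

fun check_edges :: "(nat \<times> nat) list \<Rightarrow> com" where
  "check_edges [] = CSkip"
| "check_edges ((i, j) # L) =
     CSeq (edge_check (20 + 2 * i) (20 + 2 * j)) (CSeq (CIf 7 CSkip (CConst 6 0)) (check_edges L))"

definition check_assignment :: "(nat \<times> nat) list \<Rightarrow> com" where
  "check_assignment L = CSeq (CConst 6 1) (CSeq (check_edges L) (CIf 6 (CConst 5 1) CSkip))"

abbreviation check_vars :: "nat set" where
  "check_vars \<equiv> {6, 7, 8, 9, 10, 11, 12, 13, 17}"

lemma respects_edges_Cons [simp]:
  "respects_edges es ((i, j) # L) \<tau> \<longleftrightarrow> (\<tau> i, \<tau> j) \<in> inst_edges es \<and> respects_edges es L \<tau>"
  by (simp add: respects_edges_def)

lemma frame_assignment: "frame W M M' \<Longrightarrow> W \<subseteq> {..<20} \<Longrightarrow> assignment M' = assignment M"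
  using frame_var[of W M M'] by fastforce

lemma check_edges_spec:
  assumes "layout n es M"
  shows "spec (check_edges L) M check_vars
    (\<lambda>M'. var M' 6 \<noteq> 0 \<longleftrightarrow> var M 6 \<noteq> 0 \<and> respects_edges es L (assignment M))
    (length L * (1000 * (length es + 1) + 10))"
  using assms
proof (induction L arbitrary: M)
  case Nil
  show ?case unfolding check_edges.simps
    by (rule spec_weaken[OF spec_CSkip]) (auto simp: respects_edges_def)
next
  case (Cons p L)
  obtain i j where p: "p = (i, j)" by (cases p)
  show ?case unfolding p check_edges.simps
  proof (rule spec_CSeq[OF edge_check_spec[OF Cons.prems], where V = check_vars
        and T = "length L * (1000 * (length es + 1) + 10) + 9"])
    fix M1 assume M1: "frame edge_check_vars M M1"
      "var M1 7 \<noteq> 0 \<longleftrightarrow> (assignment M i, assignment M j) \<in> inst_edges es"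
    show "spec (CSeq (CIf 7 CSkip (CConst 6 0)) (check_edges L)) M1 check_vars
      (\<lambda>M'. var M' 6 \<noteq> 0 \<longleftrightarrow> var M 6 \<noteq> 0 \<and> respects_edges es ((i, j) # L) (assignment M))
      (length L * (1000 * (length es + 1) + 10) + 9)"
    proof (rule spec_CSeq[where U = "{6}" and S = 9 and V = check_vars
          and P = "\<lambda>M2. var M2 6 \<noteq> 0 \<longleftrightarrow> var M 6 \<noteq> 0 \<and> var M1 7 \<noteq> 0"])
      have "4 \<le> M1 1" using layout_base[OF Cons.prems] frame_base[OF M1(1)] by simp
      then show "spec (CIf 7 CSkip (CConst 6 0)) M1 {6}
        (\<lambda>M2. var M2 6 \<noteq> 0 \<longleftrightarrow> var M 6 \<noteq> 0 \<and> var M1 7 \<noteq> 0) 9"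
        using frame_var[OF M1(1), of 6] by (intro spec_intro) auto
      fix M2 assume M2: "frame {6} M1 M2" "var M2 6 \<noteq> 0 \<longleftrightarrow> var M 6 \<noteq> 0 \<and> var M1 7 \<noteq> 0"
      have fr: "frame check_vars M M2" using frame_trans[OF M1(1) M2(1)] by (rule frame_mono) auto
      have "layout n es M2" by (rule layout_frame[OF Cons.prems fr]) auto
      moreover have "assignment M2 = assignment M" by (rule frame_assignment[OF fr]) auto
      ultimately
      show "spec (check_edges L) M2 check_vars
        (\<lambda>M'. var M' 6 \<noteq> 0 \<longleftrightarrow> var M 6 \<noteq> 0 \<and> respects_edges es ((i, j) # L) (assignment M))
        (length L * (1000 * (length es + 1) + 10))"
        using M1(2) M2(2) by (intro spec_weaken[OF Cons.IH]) auto
    qed auto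
  qed (auto simp: algebra_simps)
qed

definition check_time :: "nat \<Rightarrow> nat \<Rightarrow> nat" where
  "check_time l m = l * (1000 * (m + 1) + 10) + 13"

lemma check_assignment_spec:
  assumes "layout n es M"
  shows "spec (check_assignment L) M (insert 5 check_vars)
    (\<lambda>M'. var M' 5 \<noteq> 0 \<longleftrightarrow> var M 5 \<noteq> 0 \<or> respects_edges es L (assignment M))
    (check_time (length L) (length es))"
  unfolding check_assignment_def check_time_def
proof (rule spec_CSeq[where U = "{6}" and P = "\<lambda>M1. var M1 6 = 1" and S = 4
      and V = "insert 5 check_vars" and T = "length L * (1000 * (length es + 1) + 10) + 9"])
  show "spec (CConst 6 1) M {6} (\<lambda>M1. var M1 6 = 1) 4"
    using layout_base[OF assms] by (intro spec_intro) auto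
  fix M1 assume M1: "frame {6} M M1" "var M1 6 = 1"
  have L1: "layout n es M1" by (rule layout_frame[OF assms M1(1)]) auto
  show "spec (CSeq (check_edges L) (CIf 6 (CConst 5 1) CSkip)) M1 (insert 5 check_vars)
    (\<lambda>M'. var M' 5 \<noteq> 0 \<longleftrightarrow> var M 5 \<noteq> 0 \<or> respects_edges es L (assignment M))
    (length L * (1000 * (length es + 1) + 10) + 9)"
  proof (rule spec_CSeq[OF check_edges_spec[OF L1], where V = "{5}" and T = 9])
    fix M2 assume M2: "frame check_vars M1 M2"
      "var M2 6 \<noteq> 0 \<longleftrightarrow> var M1 6 \<noteq> 0 \<and> respects_edges es L (assignment M1)"
    have fr: "frame check_vars M M2" using frame_trans[OF M1(1) M2(1)] by (rule frame_mono) auto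
    have "var M2 5 = var M 5" using frame_var[OF fr] by simp
    moreover have "4 \<le> M2 1" using frame_base[OF fr] layout_base[OF assms] by simp
    moreover have "assignment M1 = assignment M" by (rule frame_assignment[OF M1(1)]) auto
    ultimately show "spec (CIf 6 (CConst 5 1) CSkip) M2 {5}
      (\<lambda>M'. var M' 5 \<noteq> 0 \<longleftrightarrow> var M 5 \<noteq> 0 \<or> respects_edges es L (assignment M)) 9"
      using M1(2) M2(2) by (intro spec_intro) auto
  qed auto
qed auto

definition extendable ::
    "(nat \<times> nat) list \<Rightarrow> (nat \<times> nat) list \<Rightarrow> nat \<Rightarrow> (nat \<Rightarrow> nat) \<Rightarrow> nat \<Rightarrow> nat \<Rightarrow> bool" where
  "extendable es L n g i d \<longleftrightarrow>
     (\<exists>\<tau>. (\<forall>j<i. \<tau> j = g j) \<and> (\<forall>j. i \<le> j \<and> j < i + d \<longrightarrow> \<tau> j < n) \<and> respects_edges es L \<tau>)"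

lemma extendable_cong:
  "(\<And>j. j < i \<Longrightarrow> g j = g' j) \<Longrightarrow> extendable es L n g i d \<longleftrightarrow> extendable es L n g' i d"
  unfolding extendable_def by simp

lemma extendable_0:
  assumes "\<forall>(a, b)\<in>set L. a < i \<and> b < i"
  shows "extendable es L n g i 0 \<longleftrightarrow> respects_edges es L g"
proof
  assume "extendable es L n g i 0"
  then obtain \<tau> where "\<forall>j<i. \<tau> j = g j" "respects_edges es L \<tau>"
    unfolding extendable_def by blast
  then show "respects_edges es L g" using assms unfolding respects_edges_def by fastforce
qed (auto simp: extendable_def)

lemma extendable_Suc:
  "extendable es L n g i (Suc d) \<longleftrightarrow> (\<exists>v<n. extendable es L n (g(i := v)) (Suc i) d)"
proof
  assume "extendable es L n g i (Suc d)"
  then obtain \<tau> where "\<forall>j<i. \<tau> j = g j" "\<forall>j. i \<le> j \<and> j < i + Suc d \<longrightarrow> \<tau> j < n"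
    "respects_edges es L \<tau>" unfolding extendable_def by blast
  then show "\<exists>v<n. extendable es L n (g(i := v)) (Suc i) d"
    unfolding extendable_def by (intro exI[of _ "\<tau> i"] conjI exI[of _ \<tau>]) (auto simp: less_Suc_eq)
next
  assume "\<exists>v<n. extendable es L n (g(i := v)) (Suc i) d"
  then obtain v \<tau> where "v < n" "\<forall>j<Suc i. \<tau> j = (g(i := v)) j"
    "\<forall>j. Suc i \<le> j \<and> j < Suc i + d \<longrightarrow> \<tau> j < n" "respects_edges es L \<tau>"
    unfolding extendable_def by blast
  moreover have "\<tau> j < n" if "i \<le> j" "j < i + Suc d" for j
    using calculation that by (cases "j = i") auto
  ultimately show "extendable es L n g i (Suc d)"
    unfolding extendable_def by (intro exI[of _ \<tau>]) auto
qed

definition enum_init :: "nat \<Rightarrow> com" where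
  "enum_init i = CSeq (CConst (20 + 2 * i) 0) (CSub (21 + 2 * i) 0 (20 + 2 * i))"

definition enum_next :: "nat \<Rightarrow> com" where
  "enum_next i = CSeq (CAdd (20 + 2 * i) (20 + 2 * i) 14) (CSub (21 + 2 * i) 0 (20 + 2 * i))"

text \<open>Runs the images of the vertices i, ..., i + d - 1 of G through 0, ..., n - 1 in nested
  iterations; the counter 21 + 2k holds n minus the image 20 + 2k.\<close>
primrec enum :: "nat \<Rightarrow> nat \<Rightarrow> (nat \<times> nat) list \<Rightarrow> com" where
  "enum 0 i L = check_assignment L"
| "enum (Suc d) i L =
     CSeq (enum_init i) (CWhile (21 + 2 * i) (CSeq (enum d (Suc i) L) (enum_next i)))"

lemma enum_init_spec:
  assumes "layout n es M"
  shows "spec (enum_init i) M {20 + 2 * i, 21 + 2 * i}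
    (\<lambda>M'. var M' (20 + 2 * i) = 0 \<and> var M' (21 + 2 * i) = n) 14"
  using assms layout_base[OF assms] unfolding layout_def
  by (intro spec_intro) (auto simp: enum_init_def)

lemma enum_next_spec:
  assumes "layout n es M"
  shows "spec (enum_next i) M {20 + 2 * i, 21 + 2 * i}
    (\<lambda>M'. var M' (20 + 2 * i) = Suc (var M (20 + 2 * i)) \<and>
      var M' (21 + 2 * i) = n - Suc (var M (20 + 2 * i))) 20"
  using assms layout_base[OF assms] unfolding layout_def
  by (intro spec_intro) (auto simp: enum_next_def)

primrec enum_time :: "nat \<Rightarrow> nat \<Rightarrow> nat \<Rightarrow> nat" where
  "enum_time C n 0 = C"
| "enum_time C n (Suc d) = 18 + (enum_time C n d + 25) * n"

definition enum_vars :: "nat \<Rightarrow> nat set" where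
  "enum_vars i = insert 5 check_vars \<union> {x. 20 + 2 * i \<le> x}"

lemma enum_loop_spec:
  assumes inner: "\<And>M'. layout n es M' \<Longrightarrow> spec (enum d (Suc i) L) M' (enum_vars (Suc i))
      (\<lambda>M''. var M'' 5 \<noteq> 0 \<longleftrightarrow> var M' 5 \<noteq> 0 \<or> extendable es L n (assignment M') (Suc i) d) T"
    and "layout n es M" "var M (20 + 2 * i) = 0" "var M (21 + 2 * i) = n"
  shows "spec (CWhile (21 + 2 * i) (CSeq (enum d (Suc i) L) (enum_next i))) M (enum_vars i)
    (\<lambda>M'. var M' 5 \<noteq> 0 \<longleftrightarrow> var M 5 \<noteq> 0 \<or> extendable es L n (assignment M) i (Suc d))
    ((T + 25) * n + 4)"
proof -
  let ?x = "20 + 2 * i" and ?c = "21 + 2 * i" and ?g = "assignment M"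
  define found where
    "found v \<longleftrightarrow> var M 5 \<noteq> 0 \<or> (\<exists>w<v. extendable es L n (?g(i := w)) (Suc i) d)" for v
  define I where
    "I M' \<longleftrightarrow> (\<exists>v\<le>n. var M' ?x = v \<and> var M' ?c = n - v \<and> (var M' 5 \<noteq> 0 \<longleftrightarrow> found v))" for M'
  have "spec (CWhile ?c (CSeq (enum d (Suc i) L) (enum_next i))) M (enum_vars i)
    (\<lambda>M'. I M' \<and> var M' ?c = 0) ((T + 25) * n + 4)"
  proof (rule spec_CWhile[where f = "\<lambda>M'. var M' ?c" and B = "T + 20"])
    show "I M" using assms(3,4) unfolding I_def found_def by auto
    show "(T + 20 + 5) * var M ?c + 4 \<le> (T + 25) * n + 4" using assms(4) by simp
    fix M' assume "I M'" "var M' ?c \<noteq> 0" and fr: "frame (enum_vars i) M M'"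
    then obtain v where v: "v < n" "var M' ?x = v" "var M' ?c = n - v" "var M' 5 \<noteq> 0 \<longleftrightarrow> found v"
      unfolding I_def by fastforce
    have L': "layout n es M'" by (rule layout_frame[OF assms(2) fr]) (auto simp: enum_vars_def)
    have "assignment M' j = (?g(i := v)) j" if "j < Suc i" for j
      using frame_var[OF fr, of "20 + 2 * j"] that v(2) by (auto simp: enum_vars_def)
    then have ext: "extendable es L n (assignment M') (Suc i) d \<longleftrightarrow>
      extendable es L n (?g(i := v)) (Suc i) d"
      by (rule extendable_cong)
    show "spec (CSeq (enum d (Suc i) L) (enum_next i)) M' (enum_vars i)
      (\<lambda>M''. I M'' \<and> var M'' ?c < var M' ?c) (T + 20)"
    proof (rule spec_CSeq[OF inner[OF L'], where V = "{?x, ?c}" and T = 20])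
      fix M2 assume M2: "frame (enum_vars (Suc i)) M' M2"
        "var M2 5 \<noteq> 0 \<longleftrightarrow> var M' 5 \<noteq> 0 \<or> extendable es L n (assignment M') (Suc i) d"
      have found: "var M2 5 \<noteq> 0 \<longleftrightarrow> found (Suc v)"
        using M2(2) v(4) ext by (auto simp: found_def less_Suc_eq)
      have x: "var M2 ?x = v"
        using frame_var[OF M2(1), of ?x] v(2) by (simp add: enum_vars_def)
      have "layout n es M2"
        by (rule layout_frame[OF L' M2(1)]) (auto simp: enum_vars_def)
      then show "spec (enum_next i) M2 {?x, ?c} (\<lambda>M''. I M'' \<and> var M'' ?c < var M' ?c) 20"
      proof (rule spec_weaken[OF enum_next_spec])
        fix M3 assume "frame {?x, ?c} M2 M3"
          "var M3 ?x = Suc (var M2 ?x) \<and> var M3 ?c = n - Suc (var M2 ?x)"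
        then show "I M3 \<and> var M3 ?c < var M' ?c"
          using frame_var[of "{?x, ?c}" M2 M3 5] found x v(1,3) unfolding I_def by auto
      qed auto
    qed (auto simp: enum_vars_def)
  qed
  then show ?thesis by (rule spec_weaken) (auto simp: I_def found_def extendable_Suc)
qed

lemma enum_spec:
  assumes "layout n es M" "\<forall>(a, b)\<in>set L. a < i + d \<and> b < i + d"
  shows "spec (enum d i L) M (enum_vars i)
    (\<lambda>M'. var M' 5 \<noteq> 0 \<longleftrightarrow> var M 5 \<noteq> 0 \<or> extendable es L n (assignment M) i d)
    (enum_time (check_time (length L) (length es)) n d)"
  using assms
proof (induction d arbitrary: i M)
  case 0
  show ?case unfolding enum.simps enum_time.simps
    using extendable_0[of L i es n "assignment M"] 0(2)
    by (intro spec_weaken[OF check_assignment_spec[OF 0(1)]]) (auto simp: enum_vars_def)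
next
  case (Suc d)
  let ?T = "enum_time (check_time (length L) (length es)) n d"
  show ?case unfolding enum.simps enum_time.simps
  proof (rule spec_CSeq[OF enum_init_spec[OF Suc.prems(1)], where V = "enum_vars i"
        and T = "(?T + 25) * n + 4"])
    fix M1 assume M1: "frame {20 + 2 * i, 21 + 2 * i} M M1"
      "var M1 (20 + 2 * i) = 0 \<and> var M1 (21 + 2 * i) = n"
    have inner: "spec (enum d (Suc i) L) M' (enum_vars (Suc i))
      (\<lambda>M''. var M'' 5 \<noteq> 0 \<longleftrightarrow> var M' 5 \<noteq> 0 \<or> extendable es L n (assignment M') (Suc i) d) ?T"
      if "layout n es M'" for M'
      using Suc.IH[OF that] Suc.prems(2) by auto
    have "var M1 5 = var M 5" using frame_var[OF M1(1)] by simp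
    moreover have "extendable es L n (assignment M1) i (Suc d) \<longleftrightarrow>
      extendable es L n (assignment M) i (Suc d)"
      using frame_var[OF M1(1)] by (intro extendable_cong) simp
    ultimately
    show "spec (CWhile (21 + 2 * i) (CSeq (enum d (Suc i) L) (enum_next i))) M1 (enum_vars i)
      (\<lambda>M'. var M' 5 \<noteq> 0 \<longleftrightarrow> var M 5 \<noteq> 0 \<or> extendable es L n (assignment M) i (Suc d))
      ((?T + 25) * n + 4)"
      using enum_loop_spec[OF inner layout_frame[OF Suc.prems(1) M1(1)]] M1(2) by auto
  qed (auto simp: enum_vars_def)
qed

definition main :: "nat \<Rightarrow> (nat \<times> nat) list \<Rightarrow> com" where
  "main k L = CSeq (CConst 5 0) (enum k 0 L)"

lemma main_spec:
  assumes "layout n es M" "\<forall>(a, b)\<in>set L. a < k \<and> b < k"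
  shows "spec (main k L) M UNIV
    (\<lambda>M'. var M' 5 \<noteq> 0 \<longleftrightarrow> (\<exists>\<tau>. (\<forall>j<k. \<tau> j < n) \<and> respects_edges es L \<tau>))
    (4 + enum_time (check_time (length L) (length es)) n k)"
  unfolding main_def
proof (rule spec_CSeq[where U = "{5}" and P = "\<lambda>M1. var M1 5 = 0" and S = 4 and V = UNIV])
  show "spec (CConst 5 0) M {5} (\<lambda>M1. var M1 5 = 0) 4"
    using layout_base[OF assms(1)] by (intro spec_intro) auto
  fix M1 assume M1: "frame {5} M M1" "var M1 5 = 0"
  have "layout n es M1" by (rule layout_frame[OF assms(1) M1(1)]) auto
  then show "spec (enum k 0 L) M1 UNIV
    (\<lambda>M'. var M' 5 \<noteq> 0 \<longleftrightarrow> (\<exists>\<tau>. (\<forall>j<k. \<tau> j < n) \<and> respects_edges es L \<tau>))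
    (enum_time (check_time (length L) (length es)) n k)"
    using assms(2) M1(2) by (intro spec_weaken[OF enum_spec]) (auto simp: extendable_def)
qed auto

section \<open>The RAM program\<close>

lemma ram_input_simps:
  "ram_input n es 0 = n" "ram_input n es 1 = length es" "ram_input n es (Suc 0) = length es"
  "i < length es \<Longrightarrow> ram_input n es (2 + 2 * i) = fst (es ! i)"
  "i < length es \<Longrightarrow> ram_input n es (Suc (Suc (2 * i))) = fst (es ! i)"
  "i < length es \<Longrightarrow> ram_input n es (3 + 2 * i) = snd (es ! i)"
  "es \<noteq> [] \<Longrightarrow> ram_input n es (Suc (Suc 0)) = fst (es ! 0)"
  "es \<noteq> [] \<Longrightarrow> ram_input n es (Suc (Suc (Suc 0))) = snd (es ! 0)"
  by (auto simp: ram_input_def neq_Nil_conv)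

lemma layout_intro:
  assumes "M 1 = b" "b = (if es = [] then 4 else 4 * length es)" "M b = n" "M (b + 4) = b"
    "M (b + 14) = 1" "M (b + 15) = 2" "M (b + 16) = 4" "M (b + 3) \<noteq> 0 \<longleftrightarrow> es \<noteq> []"
    "es \<noteq> [] \<Longrightarrow> M (b + 1) = fst (es ! 0)" "es \<noteq> [] \<Longrightarrow> M (b + 2) = snd (es ! 0)"
    "\<And>i. 1 \<le> i \<Longrightarrow> i < length es \<Longrightarrow> M (2 + 2 * i) = fst (es ! i)"
    "\<And>i. 1 \<le> i \<Longrightarrow> i < length es \<Longrightarrow> M (3 + 2 * i) = snd (es ! i)"
  shows "layout n es M"
  using assms unfolding layout_def by (auto simp: prod_eq_iff)

text \<open>Initialisation: the base 4 * length es is obtained by doubling cell 1 twice, unless es = [],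
  where the base is 4 (instructions 15 and 16).\<close>
definition boot :: "instr list" where
  "boot = [Jz 1 15,
    AddI 1 1 1, AddI 1 1 1, StoreInd 1 0,
    LoadConst 0 1, AddI 0 0 1, StoreInd 0 2,
    LoadConst 0 2, AddI 0 0 1, StoreInd 0 3,
    LoadConst 0 3, AddI 0 0 1, LoadConst 2 1, StoreInd 0 2,
    Jmp 17,
    LoadConst 1 4, StoreInd 1 0,
    LoadConst 0 4, AddI 0 0 1, StoreInd 0 1,
    LoadConst 0 14, AddI 0 0 1, LoadConst 2 1, StoreInd 0 2,
    LoadConst 0 15, AddI 0 0 1, LoadConst 2 2, StoreInd 0 2,
    LoadConst 0 16, AddI 0 0 1, LoadConst 2 4, StoreInd 0 2]"

lemma boot_run:
  assumes "code_at P 0 boot"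
  shows "\<exists>t M. t \<le> 30 \<and> (ram_step P ^^ t) (0, ram_input n es) = (32, M) \<and> layout n es M"
proof (cases "es = []")
  case True
  have "ram_input n [] 7 = 0" by (simp add: ram_input_def)
  then have "\<exists>M. (ram_step P ^^ 18) (0, ram_input n es) = (32, M) \<and> layout n es M"
    using assms True
    apply (simp add: boot_def code_at_Cons numeral_eq_Suc funpow_Suc_apply ram_input_simps
        del: One_nat_def)
    apply (rule layout_intro[where b = 4])
    apply (simp_all add: numeral_eq_Suc del: One_nat_def)
    done
  then show ?thesis by (intro exI[of _ 18]) auto
next
  case False
  then have len4: "length es + length es + (length es + length es) \<noteq> x" if "x \<in> {0, 1, 2, 3}" for x
    using that by (cases es) auto
  have "\<exists>M. (ram_step P ^^ 30) (0, ram_input n es) = (32, M) \<and> layout n es M"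
    using assms False len4[of 0] len4[of 1] len4[of 2] len4[of 3]
    apply (simp add: boot_def code_at_Cons numeral_eq_Suc funpow_Suc_apply ram_input_simps
        del: One_nat_def)
    apply (rule layout_intro[where b = "4 * length es"])
    apply (simp_all add: ram_input_simps nth_Cons' del: One_nat_def)
    done
  then show ?thesis by (intro exI[of _ 30]) auto
qed

text \<open>Sets the output cell 0 to 1 iff variable 5 is 0, i.e. iff no homomorphism was found.\<close>
definition halt_code :: "nat \<Rightarrow> instr list" where
  "halt_code E = test_jump 5 (E + 6) @ [LoadConst 0 0, Jmp (E + 7), LoadConst 0 1]"

lemma halt_code_run:
  assumes "code_at P E (halt_code E)" "same_off_scratch Mc M" "4 \<le> M 1"
  shows "\<exists>t M'. t \<le> 6 \<and> (ram_step P ^^ t) (E, Mc) = (E + 7, M') \<and> (M' 0 \<noteq> 0 \<longleftrightarrow> var M 5 = 0)"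
proof -
  obtain Mc0 where Mc0: "(ram_step P ^^ 4) (E, Mc) = (if var M 5 = 0 then E + 6 else E + 4, Mc0)"
    using simulates_test_jump[of P E 5 "E + 6" M] assms unfolding simulates_def
    by (auto simp: halt_code_def code_at_append)
  have code: "P ! (E + 4) = LoadConst 0 0" "P ! (E + 5) = Jmp (E + 7)" "P ! (E + 6) = LoadConst 0 1"
    "E + 6 < length P"
    using assms(1) by (auto simp: halt_code_def code_at_append code_at_Cons ac_simps)
  show ?thesis
  proof (cases "var M 5 = 0")
    case True
    then show ?thesis using Mc0 code funpow_add_apply[of 4 1 "ram_step P"]
      by (intro exI[of _ 5]) (auto simp: add.commute)
  next
    case False
    then show ?thesis using Mc0 code funpow_add_apply[of 4 2 "ram_step P"]
      by (intro exI[of _ 6]) (auto simp: numeral_eq_Suc add.commute)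
  qed
qed

lemma length_boot: "length boot = 32"
  by (simp add: boot_def)

lemma code_at_self: "code_at P 0 P"
  by (simp add: code_at_def)

definition prog :: "nat \<Rightarrow> (nat \<times> nat) list \<Rightarrow> instr list" where
  "prog k L = boot @ compile 32 (main k L) @ halt_code (32 + code_size (main k L))"

lemma prog_run:
  assumes "\<forall>(a, b)\<in>set L. a < k \<and> b < k"
  shows "\<exists>t. t \<le> 40 + enum_time (check_time (length L) (length es)) n k \<and>
    ram_halted (prog k L) (ram_run (prog k L) n es t) \<and>
    (snd (ram_run (prog k L) n es t) 0 \<noteq> 0 \<longleftrightarrow> \<not> (\<exists>\<tau>. (\<forall>j<k. \<tau> j < n) \<and> respects_edges es L \<tau>))"
proof -
  let ?P = "prog k L" and ?E = "32 + code_size (main k L)"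
  have code: "code_at ?P 0 boot" "code_at ?P 32 (compile 32 (main k L))"
    "code_at ?P ?E (halt_code ?E)"
    using code_at_self[of ?P] unfolding prog_def code_at_append by (auto simp: length_boot)
  have length: "length ?P = ?E + 7"
    by (simp add: prog_def length_boot halt_code_def)
  obtain t1 M1 where 1: "t1 \<le> 30" "(ram_step ?P ^^ t1) (0, ram_input n es) = (32, M1)"
    "layout n es M1"
    using boot_run[OF code(1)] by blast
  obtain t2 M2 where 2: "exec (main k L) M1 t2 M2"
    "t2 \<le> 4 + enum_time (check_time (length L) (length es)) n k"
    "M2 1 = M1 1" "var M2 5 \<noteq> 0 \<longleftrightarrow> (\<exists>\<tau>. (\<forall>j<k. \<tau> j < n) \<and> respects_edges es L \<tau>)"
    using main_spec[OF 1(3) assms] unfolding spec_def wp_def frame_def by blast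
  have base: "4 \<le> M1 1" by (rule layout_base[OF 1(3)])
  obtain Mc2 where run2: "(ram_step ?P ^^ t2) (32, M1) = (?E, Mc2)" "same_off_scratch Mc2 M2"
    using compile_correct[OF 2(1) code(2) base] unfolding simulates_def same_off_scratch_def
    by blast
  obtain t3 M3 where 3: "t3 \<le> 6" "(ram_step ?P ^^ t3) (?E, Mc2) = (?E + 7, M3)"
    "M3 0 \<noteq> 0 \<longleftrightarrow> var M2 5 = 0"
    using halt_code_run[OF code(3) run2(2)] base 2(3) by auto
  have "ram_run ?P n es (t1 + t2 + t3) = (?E + 7, M3)"
    unfolding ram_run_def using 1(2) run2(1) 3(2) by (simp add: funpow_add_apply)
  then show ?thesis
    using 1(1) 2(2,4) 3(1,3) length by (intro exI[of _ "t1 + t2 + t3"]) (auto simp: ram_halted_def)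
qed

section \<open>Running time\<close>

lemma enum_time_bound:
  assumes "C \<le> K * S" "n \<le> S" "1 \<le> S" "44 \<le> K"
  shows "enum_time C n d \<le> K ^ (d + 1) * S ^ (d + 1)"
proof (induction d)
  case 0
  then show ?case using assms(1) by simp
next
  case (Suc d)
  define X where "X = K ^ (d + 1) * S ^ (d + 1)"
  have X: "1 \<le> X" unfolding X_def using assms(3,4) by (simp add: one_le_power)
  have "enum_time C n (Suc d) = 18 + (enum_time C n d + 25) * n" by simp
  also have "\<dots> \<le> 18 + (X + 25) * S"
    using Suc.IH assms(2) unfolding X_def by (intro add_left_mono mult_le_mono) auto
  also have "\<dots> = X * S + 18 + 25 * S" by (simp add: algebra_simps)
  also have "\<dots> \<le> X * S + 43 * S" using assms(3) by simp
  also have "\<dots> \<le> X * S + 43 * (X * S)" using X by (intro add_left_mono mult_le_mono2) simp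
  also have "\<dots> = 44 * (X * S)" by simp
  also have "\<dots> \<le> K * (X * S)" using assms(4) by (intro mult_le_mono1)
  also have "\<dots> = K ^ (Suc d + 1) * S ^ (Suc d + 1)" unfolding X_def by (simp add: algebra_simps)
  finally show ?case .
qed

lemma check_time_bound: "check_time l m \<le> 1100 * (l + 1) * (n + m + 1)"
proof -
  have "l * (1000 * (m + 1) + 10) \<le> l * (1010 * (n + m + 1))" by (intro mult_le_mono2) simp
  then show ?thesis unfolding check_time_def by (simp add: algebra_simps)
qed

lemma prog_poly_time:
  assumes "\<forall>(a, b)\<in>set L. a < k \<and> b < k"
  shows "\<exists>t. t \<le> (40 + (1100 * (length L + 1)) ^ (k + 1)) * inst_size n es ^ (k + 1) \<and>
    ram_halted (prog k L) (ram_run (prog k L) n es t) \<and>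
    (snd (ram_run (prog k L) n es t) 0 \<noteq> 0 \<longleftrightarrow> \<not> (\<exists>\<tau>. (\<forall>j<k. \<tau> j < n) \<and> respects_edges es L \<tau>))"
proof -
  let ?K = "1100 * (length L + 1)" and ?S = "inst_size n es"
  obtain t where t: "t \<le> 40 + enum_time (check_time (length L) (length es)) n k"
    "ram_halted (prog k L) (ram_run (prog k L) n es t)"
    "snd (ram_run (prog k L) n es t) 0 \<noteq> 0 \<longleftrightarrow> \<not> (\<exists>\<tau>. (\<forall>j<k. \<tau> j < n) \<and> respects_edges es L \<tau>)"
    using prog_run[OF assms] by blast
  have "enum_time (check_time (length L) (length es)) n k \<le> ?K ^ (k + 1) * ?S ^ (k + 1)"
    using check_time_bound[of "length L" "length es" n]
    by (intro enum_time_bound) (auto simp: inst_size_def)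
  moreover have "1 \<le> ?S ^ (k + 1)" unfolding inst_size_def by (rule one_le_power) simp
  ultimately have "t \<le> 40 * ?S ^ (k + 1) + ?K ^ (k + 1) * ?S ^ (k + 1)" using t(1) by linarith
  then have "t \<le> (40 + ?K ^ (k + 1)) * ?S ^ (k + 1)" by (simp add: add_mult_distrib)
  with t(2,3) show ?thesis by blast
qed

theorem lemma4p5:
  fixes VG :: "'g set" and EG :: "('g \<times> 'g) set"
    and VH :: "'h set" and EH :: "('h \<times> 'h) set"
  assumes "is_graph VG EG" and "finite VG"
    and "is_graph VH EH" and "countable VH"
    and "universal_for_Forb VG EG VH EH"
  shows "csp_poly_time VH EH"
proof -
  obtain gs where gs: "set gs = VG" using finite_list[OF assms(2)] by blast
  let ?k = "length gs" and ?L = "index_edges gs EG"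
  have "\<forall>(a, b)\<in>set ?L. a < ?k \<and> b < ?k" using index_edges_less by blast
  then have "\<exists>t. t \<le> (40 + (1100 * (length ?L + 1)) ^ (?k + 1)) * inst_size n es ^ (?k + 1) \<and>
      ram_halted (prog ?k ?L) (ram_run (prog ?k ?L) n es t) \<and>
      (snd (ram_run (prog ?k ?L) n es t) 0 \<noteq> 0 \<longleftrightarrow> csp_sat VH EH n es)"
    if "csp_instance n es" for n es
    using prog_poly_time[of ?L ?k n es] hom_iff_index_assignment[OF assms(1) gs, of n es]
      csp_sat_iff_no_hom[OF assms(3-5) that] by simp
  then show ?thesis unfolding csp_poly_time_def by blast
qed

end
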